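(* Let $(X,\Sigma)$ be a measurable space and $\mathscr{A}=\{\mathsf{A}(\cdot|E)\colon E\in\Sigma\}$ a family of conditional aggregation operators (with paving $\Sigma$). Consider the property (P): $\boldsymbol{\mu}_{\mathscr{A}}(f,t)=\mu_t(\{x\in X\colon f(x)\ge t\})$ for every $t>0$, every $f\in\mathbf{F}\setminus\{0_X\}$ and every family $\boldsymbol{\mu}=(\mu_t)_{t\ge0}$ of monotone measures on $\Sigma$. (a) If $\Sigma=\{\emptyset,X\}$, then (P) holds if and only if $\mathsf{A}(\cdot|X)$ is idempotent, i.e. $\mathsf{A}(b\mathbf{1}_X|X)=b$ for all $b\in(0,\infty)$. (b) If $\Sigma\ne\{\emptyset,X\}$, then (P) holds if and only if $\mathsf{A}(f|E)=\inf_{x\in E}f(x)$ for all $f\in\mathbf{F}$ and all $E\in\Sigma\setminus\{\emptyset\}$.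
   Context: $0_X$ is the zero function on $X$. $\Sigma^0=\Sigma\setminus\{\emptyset\}$. $\mathbf{F}$ denotes the set of all $\Sigma$-measurable, nonnegative, bounded functions $f\colon X\to[0,\infty)$. A monotone measure is a map $\mu\colon\Sigma\to[0,\infty]$ with $\mu(B)\le\mu(C)$ whenever $B\subseteq C$, $\mu(\emptyset)=0$ and $\mu(X)>0$. For $E\in\Sigma^0$, a conditional aggregation operator (CAO) w.r.t. $E$ is a map $\mathsf{A}(\cdot|E)\colon\mathbf{F}\to[0,\infty]$ such that (C1) $\mathsf{A}(f|E)\le\mathsf{A}(g|E)$ whenever $f(x)\le g(x)$ for all $x\in E$, and (C2) $\mathsf{A}(\mathbf{1}_{X\setminus E}|E)=0$. Here $\mathsf{A}(\cdot|E)$ is a CAO w.r.t. $E$ for each $E\in\Sigma^0$ and $\mathsf{A}(\cdot|\emptyset)=\infty$. The generalized level measure is $\boldsymbol{\mu}_{\mathscr{A}}(f,t)=\sup\{\mu_t(E)\colon \mathsf{A}(f|E)\ge t,\ E\in\Sigma\}$ for $t\ge0$. *)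

theory Defs
  imports "HOL-Analysis.Analysis"
begin

text \<open>Functions are real-valued on type 'a; we take them extensional (zero outside X),
  so that the zero function on X is the constant zero function.\<close>

definition FF :: "'a set \<Rightarrow> 'a set set \<Rightarrow> ('a \<Rightarrow> real) set" where
  "FF X S = {f. f \<in> borel_measurable (measure_of X S (\<lambda>_. 0))
                 \<and> (\<forall>x\<in>X. 0 \<le> f x) \<and> bdd_above (f ` X)
                 \<and> (\<forall>x. x \<notin> X \<longrightarrow> f x = 0)}"

definition monotone_measure :: "'a set \<Rightarrow> 'a set set \<Rightarrow> ('a set \<Rightarrow> ennreal) \<Rightarrow> bool" where
  "monotone_measure X S \<mu> \<longleftrightarrow>
     (\<forall>B\<in>S. \<forall>C\<in>S. B \<subseteq> C \<longrightarrow> \<mu> B \<le> \<mu> C) \<and> \<mu> {} = 0 \<and> \<mu> X > 0"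

definition CAO :: "'a set \<Rightarrow> 'a set set \<Rightarrow> 'a set \<Rightarrow> (('a \<Rightarrow> real) \<Rightarrow> ennreal) \<Rightarrow> bool" where
  "CAO X S E A \<longleftrightarrow>
     (\<forall>f\<in>FF X S. \<forall>g\<in>FF X S. (\<forall>x\<in>E. f x \<le> g x) \<longrightarrow> A f \<le> A g)
     \<and> A (indicator (X - E)) = 0"

definition CAO_family :: "'a set \<Rightarrow> 'a set set \<Rightarrow> ('a set \<Rightarrow> ('a \<Rightarrow> real) \<Rightarrow> ennreal) \<Rightarrow> bool" where
  "CAO_family X S A \<longleftrightarrow>
     (\<forall>E\<in>S. E \<noteq> {} \<longrightarrow> CAO X S E (A E)) \<and> (\<forall>f. A {} f = \<infinity>)"

definition gen_level_measure ::
  "'a set set \<Rightarrow> ('a set \<Rightarrow> ('a \<Rightarrow> real) \<Rightarrow> ennreal) \<Rightarrow> (real \<Rightarrow> 'a set \<Rightarrow> ennreal)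
     \<Rightarrow> ('a \<Rightarrow> real) \<Rightarrow> real \<Rightarrow> ennreal" where
  "gen_level_measure S A \<mu> f t = (SUP E\<in>{E\<in>S. A E f \<ge> ennreal t}. \<mu> t E)"

definition prop_P :: "'a set \<Rightarrow> 'a set set \<Rightarrow> ('a set \<Rightarrow> ('a \<Rightarrow> real) \<Rightarrow> ennreal) \<Rightarrow> bool" where
  "prop_P X S A \<longleftrightarrow>
     (\<forall>\<mu> :: real \<Rightarrow> 'a set \<Rightarrow> ennreal. (\<forall>t\<ge>0. monotone_measure X S (\<mu> t)) \<longrightarrow>
       (\<forall>t>0. \<forall>f\<in>FF X S. f \<noteq> (\<lambda>_. 0) \<longrightarrow>
          gen_level_measure S A \<mu> f t = \<mu> t {x\<in>X. f x \<ge> t}))"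

end

theory Submission
  imports Defs
begin

text \<open>Test (P) with the two-valued monotone measures \<open>upset_measure B\<close>, which charge exactly
  the supersets of a fixed nonempty \<open>B \<in> \<Sigma>\<close>. At a level \<open>t > 0\<close> this shows that
  \<open>A(g|B) \<ge> t\<close> forces \<open>B \<subseteq> {g \<ge> t}\<close>, hence \<open>A(g|B) \<le> inf\<^sub>B g\<close>. For the reverse
  inequality, test \<open>g = f \<one>\<^sub>E\<close> at \<open>c = inf\<^sub>E f > 0\<close>: this gives some \<open>B \<supseteq> E\<close> with
  \<open>A(g|B) \<ge> c\<close>, and since \<open>{g \<ge> c} = E\<close> the first fact forces \<open>B = E\<close>, so
  \<open>A(f|E) = A(g|E) \<ge> c\<close>. Conversely, if \<open>A(f|E) = inf\<^sub>E f\<close> then the level set \<open>{f \<ge> t}\<close> is the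
  largest set \<open>E\<close> with \<open>A(f|E) \<ge> t\<close> (also when it is empty, as \<open>A(\<cdot>|\<emptyset>) = \<infinity>\<close>), so the
  supremum defining the generalized level measure is attained there. This equivalence holds on
  every measurable space; for \<open>\<Sigma> = {\<emptyset>, X}\<close> the functions in \<open>F\<close> are constant on \<open>X\<close> and it
  reduces to idempotence of \<open>A(\<cdot>|X)\<close>.\<close>

lemma sigma_algebra_sets_into_space:
  assumes "sigma_algebra X S" "E \<in> S"
  shows "E \<subseteq> X"
proof -
  interpret sigma_algebra X S by fact
  show ?thesis using assms(2) by (rule sets_into_space)
qed

lemma sets_space_measure_of_sigma_algebra:
  assumes "sigma_algebra X S"
  shows "sets (measure_of X S (\<lambda>_. 0)) = S" "space (measure_of X S (\<lambda>_. 0)) = X"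
  using assms sigma_algebra.sets_measure_of_eq sigma_algebra.space_measure_of_eq by blast+

lemma FF_superlevel_in_sets:
  assumes "sigma_algebra X S" "f \<in> FF X S"
  shows "{x\<in>X. t \<le> f x} \<in> S"
proof -
  have "f \<in> borel_measurable (measure_of X S (\<lambda>_. 0))" using assms(2) by (simp add: FF_def)
  hence "{x \<in> space (measure_of X S (\<lambda>_. 0)). t \<le> f x} \<in> sets (measure_of X S (\<lambda>_. 0))"
    by measurable
  thus ?thesis using sets_space_measure_of_sigma_algebra[OF assms(1)] by simp
qed

lemma FF_sublevel_in_sets:
  assumes "sigma_algebra X S" "f \<in> FF X S"
  shows "{x\<in>X. f x \<le> t} \<in> S"
proof -
  have "f \<in> borel_measurable (measure_of X S (\<lambda>_. 0))" using assms(2) by (simp add: FF_def)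
  hence "{x \<in> space (measure_of X S (\<lambda>_. 0)). f x \<le> t} \<in> sets (measure_of X S (\<lambda>_. 0))"
    by measurable
  thus ?thesis using sets_space_measure_of_sigma_algebra[OF assms(1)] by simp
qed

lemma FF_cmult_indicator:
  assumes "sigma_algebra X S" "B \<in> S" "c \<ge> 0"
  shows "(\<lambda>x. c * indicator B x) \<in> FF X S"
proof -
  have "B \<subseteq> X" using assms sigma_algebra_sets_into_space by blast
  moreover have "indicator B \<in> borel_measurable (measure_of X S (\<lambda>_. 0))"
    using sets_space_measure_of_sigma_algebra[OF assms(1)] assms(2) by (intro borel_measurable_indicator) simp
  then have "(\<lambda>x. c * indicator B x) \<in> borel_measurable (measure_of X S (\<lambda>_. 0))"
    by (intro borel_measurable_times borel_measurable_const)
  moreover have "bdd_above ((\<lambda>x. c * indicator B x :: real) ` X)"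
    by (rule bdd_aboveI[where M=c]) (auto simp: indicator_def assms)
  ultimately show ?thesis using assms(3) unfolding FF_def by (auto simp: indicator_def)
qed

lemma FF_mult_indicator:
  assumes "sigma_algebra X S" "B \<in> S" "f \<in> FF X S"
  shows "(\<lambda>x. f x * indicator B x) \<in> FF X S"
proof -
  have "f \<in> borel_measurable (measure_of X S (\<lambda>_. 0))" using assms(3) by (simp add: FF_def)
  moreover have "indicator B \<in> borel_measurable (measure_of X S (\<lambda>_. 0))"
    using sets_space_measure_of_sigma_algebra[OF assms(1)] assms(2) by (intro borel_measurable_indicator) simp
  ultimately have "(\<lambda>x. f x * indicator B x) \<in> borel_measurable (measure_of X S (\<lambda>_. 0))"
    by (rule borel_measurable_times)
  moreover obtain M where "\<forall>x\<in>X. f x \<le> M" using assms(3) unfolding FF_def bdd_above_def by auto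
  then have "bdd_above ((\<lambda>x. f x * indicator B x :: real) ` X)"
    by (intro bdd_aboveI[where M="max M 0"]) (auto simp: indicator_def max_def)
  ultimately show ?thesis using assms(3) unfolding FF_def by (auto simp: indicator_def)
qed

lemma FF_INF_nonneg:
  assumes "f \<in> FF X S" "E \<subseteq> X" "E \<noteq> {}"
  shows "bdd_below (f ` E)" "0 \<le> (INF x\<in>E. f x)"
  using assms by (auto simp: FF_def intro!: bdd_belowI[where m=0] cINF_greatest)

lemma ennreal_le_INF_iff_subset_superlevel:
  assumes "f \<in> FF X S" "E \<subseteq> X" "E \<noteq> {}"
  shows "ennreal t \<le> ennreal (INF x\<in>E. f x) \<longleftrightarrow> E \<subseteq> {x\<in>X. t \<le> f x}"
proof -
  note bdd = FF_INF_nonneg[OF assms]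
  have "ennreal t \<le> ennreal (INF x\<in>E. f x) \<longleftrightarrow> t \<le> (INF x\<in>E. f x)"
    using bdd(2) by (cases "t \<le> 0") (auto simp: ennreal_le_iff2 order_trans)
  also have "\<dots> \<longleftrightarrow> (\<forall>x\<in>E. t \<le> f x)"
    using assms(3) bdd(1) by (simp add: le_cINF_iff)
  finally show ?thesis using assms(2) by blast
qed

lemma CAO_cong:
  assumes "CAO X S E A" "f \<in> FF X S" "g \<in> FF X S" "\<And>x. x \<in> E \<Longrightarrow> f x = g x"
  shows "A f = A g"
  using assms unfolding CAO_def by (metis order.eq_iff)

lemma CAO_zero:
  assumes "sigma_algebra X S" "E \<in> S" "CAO X S E A"
  shows "A (\<lambda>_. 0) = 0"
proof -
  have "X - E \<in> S"
  proof -
    interpret sigma_algebra X S by fact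
    show ?thesis using assms(2) by (rule compl_sets)
  qed
  then have "indicator (X - E) \<in> FF X S" using FF_cmult_indicator[OF assms(1), of _ 1] by simp
  moreover have "(\<lambda>_. 0) \<in> FF X S" using FF_cmult_indicator[OF assms(1,2), of 0] by simp
  ultimately show ?thesis
    using CAO_cong[OF assms(3)] assms(3) unfolding CAO_def by (metis Diff_iff indicator_simps(2))
qed

definition upset_measure :: "'a set \<Rightarrow> 'a set \<Rightarrow> ennreal" where
  "upset_measure B C = (if B \<subseteq> C then 1 else 0)"

lemma monotone_measure_upset_measure:
  assumes "sigma_algebra X S" "B \<in> S" "B \<noteq> {}"
  shows "monotone_measure X S (upset_measure B)"
  using sigma_algebra_sets_into_space[OF assms(1,2)] assms(3)
  unfolding monotone_measure_def upset_measure_def by auto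

lemma prop_P_upset_measure:
  assumes "sigma_algebra X S" "prop_P X S A" "g \<in> FF X S" "g \<noteq> (\<lambda>_. 0)"
    and "B \<in> S" "B \<noteq> {}" "t > 0"
  shows "(SUP E\<in>{E\<in>S. A E g \<ge> ennreal t}. upset_measure B E) = upset_measure B {x\<in>X. t \<le> g x}"
proof -
  have "\<forall>s\<ge>0. monotone_measure X S ((\<lambda>_. upset_measure B) s)"
    using monotone_measure_upset_measure[OF assms(1,5,6)] by simp
  with assms(2) have "\<forall>t>0. \<forall>f\<in>FF X S. f \<noteq> (\<lambda>_. 0) \<longrightarrow>
      gen_level_measure S A (\<lambda>_. upset_measure B) f t = upset_measure B {x\<in>X. f x \<ge> t}"
    unfolding prop_P_def by (rule spec[where x="\<lambda>_. upset_measure B", THEN mp])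
  with assms(3,4,7) show ?thesis unfolding gen_level_measure_def by simp
qed

lemma prop_P_aggregation_ge_imp_superlevel:
  assumes "sigma_algebra X S" "prop_P X S A" "g \<in> FF X S" "g \<noteq> (\<lambda>_. 0)"
    and "B \<in> S" "B \<noteq> {}" "t > 0" "ennreal t \<le> A B g"
  shows "B \<subseteq> {x\<in>X. t \<le> g x}"
proof -
  have "upset_measure B B \<le> (SUP E\<in>{E\<in>S. A E g \<ge> ennreal t}. upset_measure B E)"
    using assms(5,8) by (intro SUP_upper) simp
  then show ?thesis
    unfolding prop_P_upset_measure[OF assms(1-7)] by (simp add: upset_measure_def split: if_splits)
qed

lemma prop_P_aggregation_le_INF:
  assumes "sigma_algebra X S" "prop_P X S A" "g \<in> FF X S" "g \<noteq> (\<lambda>_. 0)"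
    and "B \<in> S" "B \<noteq> {}"
  shows "A B g \<le> ennreal (INF x\<in>B. g x)"
proof (rule dense_le)
  have BX: "B \<subseteq> X" using assms(1,5) sigma_algebra_sets_into_space by blast
  fix r assume r: "r < A B g"
  then obtain t where t: "r = ennreal t" "t \<ge> 0" by (cases r) auto
  show "r \<le> ennreal (INF x\<in>B. g x)"
  proof (cases "t = 0")
    case False
    then have "B \<subseteq> {x\<in>X. t \<le> g x}"
      using r t by (intro prop_P_aggregation_ge_imp_superlevel[OF assms]) auto
    then show ?thesis
      using t ennreal_le_INF_iff_subset_superlevel[OF assms(3) BX assms(6)] by simp
  qed (use t in simp)
qed

lemma prop_P_INF_le_aggregation:
  assumes sa: "sigma_algebra X S" and fam: "CAO_family X S A" and P: "prop_P X S A"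
    and f: "f \<in> FF X S" and E: "E \<in> S" "E \<noteq> {}" and pos: "(INF x\<in>E. f x) > 0"
  shows "ennreal (INF x\<in>E. f x) \<le> A E f"
proof -
  define c where "c = (INF x\<in>E. f x)"
  define g where "g = (\<lambda>x. f x * indicator E x)"
  have EX: "E \<subseteq> X" using sa E(1) sigma_algebra_sets_into_space by blast
  have c: "c > 0" using pos unfolding c_def .
  have f_ge_c: "E \<subseteq> {x\<in>X. c \<le> f x}"
    using ennreal_le_INF_iff_subset_superlevel[OF f EX E(2), of c] unfolding c_def by simp
  have gF: "g \<in> FF X S" unfolding g_def by (rule FF_mult_indicator[OF sa E(1) f])
  have superlevel_g: "{x\<in>X. c \<le> g x} = E"
    using f_ge_c EX c unfolding g_def by (auto simp: indicator_def)
  have g_nonzero: "g \<noteq> (\<lambda>_. 0)"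
    using superlevel_g E(2) c by auto
  have "(SUP B\<in>{B\<in>S. A B g \<ge> ennreal c}. upset_measure E B) = 1"
    using prop_P_upset_measure[OF sa P gF g_nonzero E c]
    unfolding superlevel_g by (simp add: upset_measure_def)
  then have "0 < (SUP B\<in>{B\<in>S. A B g \<ge> ennreal c}. upset_measure E B)" by simp
  then obtain B where B: "B \<in> S" "A B g \<ge> ennreal c" "0 < upset_measure E B"
    by (auto simp: less_SUP_iff)
  then have "E \<subseteq> B" by (simp add: upset_measure_def split: if_splits)
  moreover have "B \<subseteq> {x\<in>X. c \<le> g x}"
    using B(1,2) \<open>E \<subseteq> B\<close> E(2) c
    by (intro prop_P_aggregation_ge_imp_superlevel[OF sa P gF g_nonzero]) auto
  ultimately have "B = E" unfolding superlevel_g by blast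
  then have "ennreal c \<le> A E g" using B(2) by simp
  also have "A E g = A E f"
    using fam E unfolding CAO_family_def g_def
    by (intro CAO_cong[OF _ FF_mult_indicator[OF sa E(1) f] f]) auto
  finally show ?thesis unfolding c_def .
qed

lemma INF_aggregation_imp_prop_P:
  assumes sa: "sigma_algebra X S" and fam: "CAO_family X S A"
    and INF: "\<forall>f\<in>FF X S. \<forall>E\<in>S. E \<noteq> {} \<longrightarrow> A E f = ennreal (INF x\<in>E. f x)"
  shows "prop_P X S A"
  unfolding prop_P_def
proof (intro allI impI ballI)
  fix \<mu> :: "real \<Rightarrow> 'a set \<Rightarrow> ennreal" and t :: real and f
  assume "\<forall>t\<ge>0. monotone_measure X S (\<mu> t)" and t: "t > 0" and f: "f \<in> FF X S"
  then have mono: "monotone_measure X S (\<mu> t)" by simp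
  define L where "L = {x\<in>X. t \<le> f x}"
  have L: "L \<in> S" unfolding L_def by (rule FF_superlevel_in_sets[OF sa f])
  have admissible_subset: "E \<subseteq> L" if E: "E \<in> S" "ennreal t \<le> A E f" for E
  proof (cases "E = {}")
    case False
    then show ?thesis
      using E INF f ennreal_le_INF_iff_subset_superlevel[OF f sigma_algebra_sets_into_space[OF sa E(1)]]
      unfolding L_def by simp
  qed simp
  have L_admissible: "ennreal t \<le> A L f"
  proof (cases "L = {}")
    case True
    then show ?thesis using fam unfolding CAO_family_def by simp
  next
    case False
    then show ?thesis
      using INF f L ennreal_le_INF_iff_subset_superlevel[OF f sigma_algebra_sets_into_space[OF sa L]]
      unfolding L_def by simp
  qed
  have "(SUP E\<in>{E\<in>S. A E f \<ge> ennreal t}. \<mu> t E) = \<mu> t L"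
  proof (rule antisym)
    show "(SUP E\<in>{E\<in>S. A E f \<ge> ennreal t}. \<mu> t E) \<le> \<mu> t L"
      using mono L admissible_subset unfolding monotone_measure_def by (auto intro!: SUP_least)
    show "\<mu> t L \<le> (SUP E\<in>{E\<in>S. A E f \<ge> ennreal t}. \<mu> t E)"
      using L L_admissible by (intro SUP_upper) simp
  qed
  then show "gen_level_measure S A \<mu> f t = \<mu> t {x\<in>X. f x \<ge> t}"
    unfolding gen_level_measure_def L_def .
qed

lemma prop_P_iff_INF_aggregation:
  assumes sa: "sigma_algebra X S" and fam: "CAO_family X S A"
  shows "prop_P X S A \<longleftrightarrow> (\<forall>f\<in>FF X S. \<forall>E\<in>S. E \<noteq> {} \<longrightarrow> A E f = ennreal (INF x\<in>E. f x))"
proof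
  assume P: "prop_P X S A"
  show "\<forall>f\<in>FF X S. \<forall>E\<in>S. E \<noteq> {} \<longrightarrow> A E f = ennreal (INF x\<in>E. f x)"
  proof (intro ballI impI)
    fix f E assume f: "f \<in> FF X S" and E: "E \<in> S" "E \<noteq> {}"
    have CAO: "CAO X S E (A E)" using fam E unfolding CAO_family_def by blast
    show "A E f = ennreal (INF x\<in>E. f x)"
    proof (cases "f = (\<lambda>_. 0)")
      case True
      then show ?thesis using CAO_zero[OF sa E(1) CAO] E(2) by simp
    next
      case False
      have "A E f \<le> ennreal (INF x\<in>E. f x)"
        by (rule prop_P_aggregation_le_INF[OF sa P f False E])
      moreover have "ennreal (INF x\<in>E. f x) \<le> A E f"
        using FF_INF_nonneg(2)[OF f sigma_algebra_sets_into_space[OF sa E(1)] E(2)]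
          prop_P_INF_le_aggregation[OF sa fam P f E]
        by (cases "(INF x\<in>E. f x) = 0") auto
      ultimately show ?thesis by (rule antisym)
    qed
  qed
qed (rule INF_aggregation_imp_prop_P[OF sa fam])

lemma FF_trivial_sigma_algebra_const:
  assumes sa: "sigma_algebra X S" and S: "S = {{}, X}" and f: "f \<in> FF X S" and x0: "x0 \<in> X"
  shows "f = (\<lambda>x. f x0 * indicator X x)"
proof
  fix x
  show "f x = f x0 * indicator X x"
  proof (cases "x \<in> X")
    case True
    have "{y\<in>X. f x0 \<le> f y} = X" "{y\<in>X. f y \<le> f x0} = X"
      using FF_superlevel_in_sets[OF sa f] FF_sublevel_in_sets[OF sa f] S x0 by auto
    then show ?thesis using True by (auto intro: antisym)
  next
    case False
    then show ?thesis using f by (simp add: FF_def)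
  qed
qed

lemma INF_aggregation_trivial_sigma_algebra_iff_idempotent:
  assumes sa: "sigma_algebra X S" and X: "X \<noteq> {}" and fam: "CAO_family X S A"
    and S: "S = {{}, X}"
  shows "(\<forall>f\<in>FF X S. \<forall>E\<in>S. E \<noteq> {} \<longrightarrow> A E f = ennreal (INF x\<in>E. f x))
     \<longleftrightarrow> (\<forall>b::real>0. A X (\<lambda>x. b * indicator X x) = ennreal b)"
proof -
  have INF_const: "(INF x\<in>X. c * indicator X x) = c" for c :: real
    using X by (simp add: indicator_def)
  have "(\<forall>f\<in>FF X S. \<forall>E\<in>S. E \<noteq> {} \<longrightarrow> A E f = ennreal (INF x\<in>E. f x))
     \<longleftrightarrow> (\<forall>c\<ge>0. A X (\<lambda>x. c * indicator X x) = ennreal c)"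
  proof
    assume "\<forall>f\<in>FF X S. \<forall>E\<in>S. E \<noteq> {} \<longrightarrow> A E f = ennreal (INF x\<in>E. f x)"
    then show "\<forall>c\<ge>0. A X (\<lambda>x. c * indicator X x) = ennreal c"
      using FF_cmult_indicator[OF sa] S X INF_const by simp
  next
    assume "\<forall>c\<ge>0. A X (\<lambda>x. c * indicator X x) = ennreal c"
    moreover obtain x0 where "x0 \<in> X" using X by blast
    moreover have "\<forall>x\<in>X. 0 \<le> f x" if "f \<in> FF X S" for f using that by (simp add: FF_def)
    ultimately show "\<forall>f\<in>FF X S. \<forall>E\<in>S. E \<noteq> {} \<longrightarrow> A E f = ennreal (INF x\<in>E. f x)"
      using FF_trivial_sigma_algebra_const[OF sa S] S INF_const by (metis empty_iff insert_iff)
  qed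
  also have "\<dots> \<longleftrightarrow> (\<forall>b::real>0. A X (\<lambda>x. b * indicator X x) = ennreal b)"
    using CAO_zero[OF sa _ , of X "A X"] fam X S unfolding CAO_family_def
    by (auto simp: le_less)
  finally show ?thesis .
qed

theorem theorem3p18:
  fixes X :: "'a set" and S :: "'a set set"
    and A :: "'a set \<Rightarrow> ('a \<Rightarrow> real) \<Rightarrow> ennreal"
  assumes "sigma_algebra X S"
    and "X \<noteq> {}"
    and "CAO_family X S A"
  shows "(S = {{}, X} \<longrightarrow>
            (prop_P X S A \<longleftrightarrow> (\<forall>b::real>0. A X (\<lambda>x. b * indicator X x) = ennreal b)))
       \<and> (S \<noteq> {{}, X} \<longrightarrow>
            (prop_P X S A \<longleftrightarrow>
              (\<forall>f\<in>FF X S. \<forall>E\<in>S. E \<noteq> {} \<longrightarrow> A E f = ennreal (INF x\<in>E. f x))))"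
  using prop_P_iff_INF_aggregation[OF assms(1,3)]
    INF_aggregation_trivial_sigma_algebra_iff_idempotent[OF assms]
  by blast

end
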